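(* Let $1/2<H<1$, let $Z$ be a continuous fractional Brownian motion with Hurst parameter $H$, let $\alpha>0$, $a_t:=H\mathrm{e}^{\alpha t/H}/\alpha$, and $Y^{(\alpha)}_t:=\int_0^t\mathrm{e}^{-\alpha s}\,dZ_{a_s}$ (pathwise Riemann–Stieltjes integral), $t\ge0$. Define for $x\ne0$ $$k_{\alpha,H}(x):=C(\alpha,H)\,\mathrm{e}^{-\alpha(1-H)x/H}\,|1-\mathrm{e}^{-\alpha x/H}|^{2H-2},\qquad C(\alpha,H):=H(2H-1)(\alpha/H)^{2(1-H)}.$$ Then for $0\le s<t$: $$\mathbf{E}\big((Y^{(\alpha)}_t-Y^{(\alpha)}_s)^2\big)=2\int_0^{t-s}(t-s-x)\,k_{\alpha,H}(x)\,dx,$$ $$\mathbf{E}\big(Y^{(\alpha)}_tY^{(\alpha)}_s\big)=\int_0^t(t-x)k_{\alpha,H}(x)\,dx+\int_0^s(s-x)k_{\alpha,H}(x)\,dx-\int_0^{t-s}(t-s-x)k_{\alpha,H}(x)\,dx.$$ Moreover, $\mathbf{E}\big((Y^{(\alpha)}_t)^2\big)=O(t)$ as $t\to\infty$, and for fixed $s\ge0$ $$\lim_{t\to\infty}\mathbf{E}\big(Y^{(\alpha)}_tY^{(\alpha)}_s\big)=s\int_0^\infty k_{\alpha,H}(x)\,dx+\int_0^s(s-x)\,k_{\alpha,H}(x)\,dx.$$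
   Context: A fractional Brownian motion with Hurst parameter $H$ is a centered Gaussian process on $[0,\infty)$ with covariance $\frac12(t^{2H}+s^{2H}-|t-s|^{2H})$. *)

theory Defs
  imports "HOL-Probability.Probability" "HOL-Library.Landau_Symbols"
begin

definition has_RS_integral ::
  "(real \<Rightarrow> real) \<Rightarrow> (real \<Rightarrow> real) \<Rightarrow> real \<Rightarrow> real \<Rightarrow> real \<Rightarrow> bool" where
  "has_RS_integral f g a b I \<longleftrightarrow>
     (\<forall>\<epsilon>>0. \<exists>\<delta>>0. \<forall>(n::nat) (x::nat \<Rightarrow> real) (\<xi>::nat \<Rightarrow> real).
        x 0 = a \<and> x n = b \<and>
        (\<forall>i<n. x i \<le> \<xi> i \<and> \<xi> i \<le> x (Suc i) \<and> x (Suc i) - x i < \<delta>) \<longrightarrow>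
        \<bar>(\<Sum>i<n. f (\<xi> i) * (g (x (Suc i)) - g (x i))) - I\<bar> < \<epsilon>)"

definition RS_integral ::
  "(real \<Rightarrow> real) \<Rightarrow> (real \<Rightarrow> real) \<Rightarrow> real \<Rightarrow> real \<Rightarrow> real" where
  "RS_integral f g a b = (THE I. has_RS_integral f g a b I)"

definition centered_gaussian_rv :: "'a measure \<Rightarrow> ('a \<Rightarrow> real) \<Rightarrow> bool" where
  "centered_gaussian_rv M X \<longleftrightarrow>
     X \<in> borel_measurable M \<and>
     ((AE \<omega> in M. X \<omega> = 0) \<or> (\<exists>\<sigma>>0. distributed M lborel X (normal_density 0 \<sigma>)))"

definition fBm :: "'a measure \<Rightarrow> real \<Rightarrow> (real \<Rightarrow> 'a \<Rightarrow> real) \<Rightarrow> bool" where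
  "fBm M H Z \<longleftrightarrow>
     prob_space M \<and>
     (\<forall>T c. finite T \<longrightarrow> T \<subseteq> {0..} \<longrightarrow>
        centered_gaussian_rv M (\<lambda>\<omega>. \<Sum>t\<in>T. c t * Z t \<omega>)) \<and>
     (\<forall>t\<ge>0. \<forall>s\<ge>0. integral\<^sup>L M (\<lambda>\<omega>. Z t \<omega> * Z s \<omega>)
        = (t powr (2*H) + s powr (2*H) - \<bar>t - s\<bar> powr (2*H)) / 2)"

definition C_const :: "real \<Rightarrow> real \<Rightarrow> real" where
  "C_const \<alpha> H = H * (2*H - 1) * (\<alpha> / H) powr (2 * (1 - H))"

definition k_fun :: "real \<Rightarrow> real \<Rightarrow> real \<Rightarrow> real" where
  "k_fun \<alpha> H x = C_const \<alpha> H * exp (- \<alpha> * (1 - H) * x / H)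
                   * \<bar>1 - exp (- \<alpha> * x / H)\<bar> powr (2*H - 2)"

end

theory Submission
  imports Defs
begin

text \<open>Integration by parts turns the Riemann--Stieltjes integral into
  Y t = U t - U 0 + \<alpha> * (integral of U over [0, t]) with U u = exp (- \<alpha> u) Z (a u).
  The exponential time change a makes U stationary in the wide sense: E (U u U v) = c \<bar>u - v\<bar>
  for an explicit function c. For any such process the second moment of the increment over an
  interval of length T is 2 (c 0 - c T) + 2 \<alpha>^2 * (integral of (T - x) c x over [0, T]).
  On (0, \<infinity>) the function c satisfies c'' = \<alpha>^2 c - k with c' 0 = 0, so integrating
  (T - x) k x by parts twice rewrites this as 2 * (integral of (T - x) k x over [0, T]).
  The covariance of Y follows by polarization, and the growth bound and the limit follow from
  the integrability of k \<ge> 0 on (0, \<infinity>).\<close>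

lemma has_integral_real_FTC:
  fixes F f :: "real \<Rightarrow> real"
  assumes "a \<le> b" "\<And>x. x \<in> {a..b} \<Longrightarrow> (F has_real_derivative f x) (at x)"
  shows "(f has_integral (F b - F a)) {a..b}"
  using assms by (intro fundamental_theorem_of_calculus)
    (auto simp: has_real_derivative_iff_has_vector_derivative[symmetric] intro: has_field_derivative_at_within)

lemma set_integral_Icc_eq_integral:
  fixes f :: "real \<Rightarrow> real"
  assumes "continuous_on {a..b} f"
  shows "(LBINT x:{a..b}. f x) = integral {a..b} f"
  by (rule set_borel_integral_eq_integral(2)[OF borel_integrable_atLeastAtMost'[OF assms]])

lemma continuous_on_UNIV_has_primitive:
  fixes f :: "real \<Rightarrow> real"
  assumes "continuous_on UNIV f"
  obtains F where "\<And>x. (F has_real_derivative f x) (at x)"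
proof -
  have "\<exists>F. \<forall>x::real. -\<infinity> < x \<longrightarrow> x < \<infinity> \<longrightarrow> (F has_vector_derivative f x) (at x)"
    using assms by (intro einterval_antiderivative) (auto simp: continuous_on_eq_continuous_at)
  then show ?thesis
    using that by (auto simp: has_real_derivative_iff_has_vector_derivative)
qed

lemma set_integrable_lborel_of_nonneg_has_integral:
  fixes f :: "real \<Rightarrow> real"
  assumes I: "(f has_integral I) S" and nonneg: "\<And>x. x \<in> S \<Longrightarrow> 0 \<le> f x"
    and S: "S \<in> sets borel" and f: "f \<in> borel_measurable borel"
  shows "set_integrable lborel S f" and "(LBINT x:S. f x) = I"
proof -
  have "f absolutely_integrable_on S"
    using I nonneg by (intro nonnegative_absolutely_integrable_1) auto
  moreover have "(\<lambda>x. indicator S x *\<^sub>R f x) \<in> borel_measurable lborel"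
    using S f by measurable
  ultimately show si: "set_integrable lborel S f"
    unfolding set_integrable_def by (simp add: integrable_completion)
  show "(LBINT x:S. f x) = I"
    using set_borel_integral_eq_integral(2)[OF si] integral_unique[OF I] by simp
qed

section \<open>Riemann--Stieltjes integration by parts\<close>

lemma tagged_partition_mono:
  fixes x \<xi> :: "nat \<Rightarrow> real"
  assumes "\<forall>i<n. x i \<le> \<xi> i \<and> \<xi> i \<le> x (Suc i)" "i \<le> j" "j \<le> n"
  shows "x i \<le> x j"
  using assms(2,3)
proof (induction j rule: dec_induct)
  case (step m)
  then show ?case using assms(1)[rule_format, of m] by auto
qed simp

lemma integral_deriv_mult_shift:
  fixes f f' g :: "real \<Rightarrow> real"
  assumes xy: "x \<le> y"
    and f: "\<And>u. (f has_real_derivative f' u) (at u)" and f': "continuous_on UNIV f'"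
    and g: "continuous_on {x..y} g"
  shows "integral {x..y} (\<lambda>u. f' u * (g u - c)) = integral {x..y} (\<lambda>u. f' u * g u) - c * (f y - f x)"
proof -
  have "(f' has_integral (f y - f x)) {x..y}"
    using xy f by (intro has_integral_real_FTC)
  moreover have "(\<lambda>u. f' u * g u) integrable_on {x..y}"
    by (intro integrable_continuous_real continuous_intros continuous_on_subset[OF f'] g) auto
  ultimately have "((\<lambda>u. f' u * g u - c * f' u) has_integral
      integral {x..y} (\<lambda>u. f' u * g u) - c * (f y - f x)) {x..y}"
    by (intro has_integral_diff has_integral_mult_right integrable_integral)
  then show ?thesis by (simp add: right_diff_distrib mult.commute integral_unique)
qed

lemma integral_deriv_mult_shift_bound:
  fixes f' g :: "real \<Rightarrow> real"
  assumes xy: "x \<le> y" and f': "continuous_on UNIV f'" and g: "continuous_on {x..y} g"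
    and B: "\<And>u. u \<in> {x..y} \<Longrightarrow> \<bar>f' u\<bar> \<le> B" and \<eta>: "\<And>u. u \<in> {x..y} \<Longrightarrow> \<bar>g u - c\<bar> \<le> \<eta>"
  shows "\<bar>integral {x..y} (\<lambda>u. f' u * (g u - c))\<bar> \<le> B * \<eta> * (y - x)"
  unfolding real_norm_def[symmetric]
proof (rule integral_bound[OF xy])
  show "continuous_on {x..y} (\<lambda>u. f' u * (g u - c))"
    by (intro continuous_intros continuous_on_subset[OF f'] g) auto
  show "norm (f' u * (g u - c)) \<le> B * \<eta>" if "u \<in> {x..y}" for u
    using B[OF that] \<eta>[OF that] by (simp add: abs_mult mult_mono')
qed

text \<open>The Riemann--Stieltjes sum over one cell [p, q] with tag \<xi> differs from the
  integrated-by-parts value by the two integrals of f' (g - g p) over [p, \<xi>] and of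
  f' (g - g q) over [\<xi>, q].\<close>
lemma RS_cell_error:
  fixes f f' g :: "real \<Rightarrow> real"
  assumes f: "\<And>u. (f has_real_derivative f' u) (at u)" and f': "continuous_on UNIV f'"
    and g: "continuous_on {p..q} g"
    and B: "\<And>u. u \<in> {p..q} \<Longrightarrow> \<bar>f' u\<bar> \<le> B"
    and \<eta>: "\<And>u v. u \<in> {p..q} \<Longrightarrow> v \<in> {p..q} \<Longrightarrow> \<bar>g u - g v\<bar> \<le> \<eta>"
    and \<xi>: "p \<le> \<xi>" "\<xi> \<le> q"
  shows "\<bar>f \<xi> * (g q - g p) - (f q * g q - f p * g p - integral {p..q} (\<lambda>u. f' u * g u))\<bar>
    \<le> B * \<eta> * (q - p)"
proof -
  have g1: "continuous_on {p..\<xi>} g" and g2: "continuous_on {\<xi>..q} g"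
    using \<xi> by (auto intro: continuous_on_subset[OF g])
  let ?J1 = "integral {p..\<xi>} (\<lambda>u. f' u * (g u - g p))"
  let ?J2 = "integral {\<xi>..q} (\<lambda>u. f' u * (g u - g q))"
  have "integral {p..\<xi>} (\<lambda>u. f' u * g u) + integral {\<xi>..q} (\<lambda>u. f' u * g u)
      = integral {p..q} (\<lambda>u. f' u * g u)"
    using \<xi> by (intro Henstock_Kurzweil_Integration.integral_combine integrable_continuous_real
        continuous_intros continuous_on_subset[OF f'] g) auto
  then have "f \<xi> * (g q - g p) - (f q * g q - f p * g p - integral {p..q} (\<lambda>u. f' u * g u))
      = ?J1 + ?J2"
    using integral_deriv_mult_shift[OF \<xi>(1) f f' g1, of "g p"]
      integral_deriv_mult_shift[OF \<xi>(2) f f' g2, of "g q"]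
    by (simp only: right_diff_distrib mult.commute[of "g _"])
  moreover have "\<bar>?J1\<bar> \<le> B * \<eta> * (\<xi> - p)"
    using \<xi> by (intro integral_deriv_mult_shift_bound f' g1 B \<eta>) auto
  moreover have "\<bar>?J2\<bar> \<le> B * \<eta> * (q - \<xi>)"
    using \<xi> by (intro integral_deriv_mult_shift_bound f' g2 B \<eta>) auto
  ultimately show ?thesis by (simp add: algebra_simps)
qed

lemma telescoping_sum_error_le:
  fixes x :: "nat \<Rightarrow> real"
  assumes "\<And>i. i < n \<Longrightarrow> \<bar>y i - (\<Phi> (x (Suc i)) - \<Phi> (x i))\<bar> \<le> K * (x (Suc i) - x i)"
  shows "\<bar>(\<Sum>i<n. y i) - (\<Phi> (x n) - \<Phi> (x 0))\<bar> \<le> K * (x n - x 0)"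
proof -
  have "\<bar>(\<Sum>i<n. y i) - (\<Phi> (x n) - \<Phi> (x 0))\<bar> = \<bar>\<Sum>i<n. y i - (\<Phi> (x (Suc i)) - \<Phi> (x i))\<bar>"
    using sum_lessThan_telescope[of "\<lambda>i. \<Phi> (x i)" n] by (simp add: sum_subtractf)
  also have "\<dots> \<le> (\<Sum>i<n. K * (x (Suc i) - x i))"
    by (rule order_trans[OF sum_abs sum_mono]) (use assms in auto)
  also have "\<dots> = K * (x n - x 0)"
    using sum_lessThan_telescope[of x n] by (simp add: sum_distrib_left[symmetric])
  finally show ?thesis .
qed

lemma has_RS_integral_by_parts:
  fixes f f' g :: "real \<Rightarrow> real"
  assumes ab: "a \<le> b"
    and f: "\<And>u. (f has_real_derivative f' u) (at u)" and f': "continuous_on UNIV f'"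
    and g: "continuous_on {a..b} g"
  shows "has_RS_integral f g a b (f b * g b - f a * g a - integral {a..b} (\<lambda>u. f' u * g u))"
  unfolding has_RS_integral_def
proof (intro allI impI)
  fix \<epsilon> :: real assume \<epsilon>: "\<epsilon> > 0"
  have "bounded (f' ` {a..b})"
    by (intro compact_imp_bounded compact_continuous_image continuous_on_subset[OF f']) auto
  then obtain B where B: "B > 0" "\<And>u. u \<in> {a..b} \<Longrightarrow> \<bar>f' u\<bar> \<le> B"
    unfolding bounded_pos by auto
  define \<eta> where "\<eta> = \<epsilon> / (B * (b - a + 1))"
  have \<eta>: "\<eta> > 0" using \<epsilon> B ab by (simp add: \<eta>_def)
  obtain d where d: "d > 0"
    and dg: "\<And>u v. u \<in> {a..b} \<Longrightarrow> v \<in> {a..b} \<Longrightarrow> dist u v < d \<Longrightarrow> dist (g u) (g v) < \<eta>"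
    using compact_uniformly_continuous[OF g compact_Icc] \<eta>
    unfolding uniformly_continuous_on_def by metis
  define \<Phi> where "\<Phi> u = f u * g u - integral {a..u} (\<lambda>u. f' u * g u)" for u
  show "\<exists>d>0. \<forall>n x \<xi>. x 0 = a \<and> x n = b \<and> (\<forall>i<n. x i \<le> \<xi> i \<and> \<xi> i \<le> x (Suc i) \<and> x (Suc i) - x i < d)
    \<longrightarrow> \<bar>(\<Sum>i<n. f (\<xi> i) * (g (x (Suc i)) - g (x i)))
          - (f b * g b - f a * g a - integral {a..b} (\<lambda>u. f' u * g u))\<bar> < \<epsilon>"
  proof (intro exI[of _ d] conjI allI impI d)
    fix n x \<xi>
    assume P: "x 0 = a \<and> x n = b \<and> (\<forall>i<n. x i \<le> \<xi> i \<and> \<xi> i \<le> x (Suc i) \<and> x (Suc i) - x i < d)"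
    then have tags: "\<forall>i<n. x i \<le> \<xi> i \<and> \<xi> i \<le> x (Suc i)" by auto
    have x_in: "x i \<in> {a..b}" if "i \<le> n" for i
      using tagged_partition_mono[OF tags, of 0 i] tagged_partition_mono[OF tags, of i n] that P by auto
    have cell: "\<bar>f (\<xi> i) * (g (x (Suc i)) - g (x i)) - (\<Phi> (x (Suc i)) - \<Phi> (x i))\<bar>
        \<le> B * \<eta> * (x (Suc i) - x i)" if i: "i < n" for i
    proof -
      have sub: "{x i..x (Suc i)} \<subseteq> {a..b}" using x_in[of i] x_in[of "Suc i"] i by auto
      have "integral {a..x i} (\<lambda>u. f' u * g u) + integral {x i..x (Suc i)} (\<lambda>u. f' u * g u)
          = integral {a..x (Suc i)} (\<lambda>u. f' u * g u)"
        using x_in[of i] x_in[of "Suc i"] i tags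
        by (intro Henstock_Kurzweil_Integration.integral_combine integrable_continuous_real
            continuous_intros continuous_on_subset[OF f'] continuous_on_subset[OF g]) auto
      moreover have "\<bar>f (\<xi> i) * (g (x (Suc i)) - g (x i)) - (f (x (Suc i)) * g (x (Suc i)) - f (x i) * g (x i)
          - integral {x i..x (Suc i)} (\<lambda>u. f' u * g u))\<bar> \<le> B * \<eta> * (x (Suc i) - x i)"
      proof (rule RS_cell_error[OF f f' continuous_on_subset[OF g sub]])
        show "\<bar>g u - g v\<bar> \<le> \<eta>" if "u \<in> {x i..x (Suc i)}" "v \<in> {x i..x (Suc i)}" for u v
          using dg[of u v] that sub P i by (fastforce simp: dist_real_def)
      qed (use B sub tags i in auto)
      ultimately show ?thesis unfolding \<Phi>_def by (simp add: algebra_simps)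
    qed
    have "\<bar>(\<Sum>i<n. f (\<xi> i) * (g (x (Suc i)) - g (x i))) - (\<Phi> b - \<Phi> a)\<bar> \<le> B * \<eta> * (b - a)"
      using telescoping_sum_error_le[of n _ \<Phi> x, OF cell] P by simp
    also have "\<dots> = \<epsilon> * ((b - a) / (b - a + 1))"
      using B ab by (simp add: \<eta>_def)
    also have "\<dots> < \<epsilon>"
      using \<epsilon> ab by (simp add: mult_less_cancel_left1 divide_less_eq)
    finally show "\<bar>(\<Sum>i<n. f (\<xi> i) * (g (x (Suc i)) - g (x i)))
          - (f b * g b - f a * g a - integral {a..b} (\<lambda>u. f' u * g u))\<bar> < \<epsilon>"
      by (simp add: \<Phi>_def)
  qed
qed

lemma has_RS_integral_unique:
  assumes ab: "a \<le> b" and I: "has_RS_integral f g a b I" and J: "has_RS_integral f g a b J"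
  shows "I = J"
proof (rule ccontr)
  assume "I \<noteq> J"
  define \<epsilon> where "\<epsilon> = \<bar>I - J\<bar> / 2"
  have \<epsilon>: "\<epsilon> > 0" using \<open>I \<noteq> J\<close> by (simp add: \<epsilon>_def)
  obtain d1 where d1: "d1 > 0" and D1: "\<And>n x \<xi>. x 0 = a \<and> x n = b
      \<and> (\<forall>i<n. x i \<le> \<xi> i \<and> \<xi> i \<le> x (Suc i) \<and> x (Suc i) - x i < d1) \<Longrightarrow>
      \<bar>(\<Sum>i<n. f (\<xi> i) * (g (x (Suc i)) - g (x i))) - I\<bar> < \<epsilon>"
    using I \<epsilon> unfolding has_RS_integral_def by meson
  obtain d2 where d2: "d2 > 0" and D2: "\<And>n x \<xi>. x 0 = a \<and> x n = b
      \<and> (\<forall>i<n. x i \<le> \<xi> i \<and> \<xi> i \<le> x (Suc i) \<and> x (Suc i) - x i < d2) \<Longrightarrow>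
      \<bar>(\<Sum>i<n. f (\<xi> i) * (g (x (Suc i)) - g (x i))) - J\<bar> < \<epsilon>"
    using J \<epsilon> unfolding has_RS_integral_def by meson
  define d where "d = min d1 d2"
  obtain n :: nat where n: "(b - a) / d < n" using reals_Archimedean2 by blast
  moreover have "0 \<le> (b - a) / d" using ab d1 d2 by (simp add: d_def)
  ultimately have n_pos: "n > 0" by simp
  define x where "x i = a + (b - a) * real i / real n" for i
  have step: "x (Suc i) - x i = (b - a) / real n" for i
    using n_pos by (simp add: x_def field_simps)
  have "d > 0" using d1 d2 by (simp add: d_def)
  then have "(b - a) / real n < d"
    using n n_pos by (simp add: field_simps)
  moreover have "0 \<le> (b - a) / real n" using ab by simp
  ultimately have "\<forall>i<n. x i \<le> x i \<and> x i \<le> x (Suc i) \<and> x (Suc i) - x i < d"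
    using step by (metis diff_ge_0_iff_ge order.refl)
  moreover have "x 0 = a" "x n = b" using n_pos by (simp_all add: x_def)
  ultimately have "x 0 = a \<and> x n = b \<and> (\<forall>i<n. x i \<le> x i \<and> x i \<le> x (Suc i) \<and> x (Suc i) - x i < d1)"
    and "x 0 = a \<and> x n = b \<and> (\<forall>i<n. x i \<le> x i \<and> x i \<le> x (Suc i) \<and> x (Suc i) - x i < d2)"
    by (auto simp: d_def)
  from D1[OF this(1)] D2[OF this(2)] show False by (simp add: \<epsilon>_def abs_if split: if_splits)
qed

lemma RS_integral_eqI: "a \<le> b \<Longrightarrow> has_RS_integral f g a b I \<Longrightarrow> RS_integral f g a b = I"
  unfolding RS_integral_def by (blast intro: has_RS_integral_unique)

section \<open>Integrals of the difference kernel c \<bar>u - v\<bar>\<close>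

context
  fixes c C :: "real \<Rightarrow> real"
  assumes C: "\<And>x. (C has_real_derivative c x) (at x)"
begin

lemma has_integral_abs_diff_kernel:
  assumes "s \<le> u" "u \<le> t"
  shows "((\<lambda>v. c \<bar>u - v\<bar>) has_integral C (u - s) + C (t - u) - 2 * C 0) {s..t}"
proof -
  have "((\<lambda>v. c (u - v)) has_integral (- C (u - u)) - (- C (u - s))) {s..u}"
    using assms(1) by (intro has_integral_real_FTC)
      (auto intro!: derivative_eq_intros DERIV_chain2[OF C])
  then have "((\<lambda>v. c (u - v)) has_integral C (u - s) - C 0) {s..u}"
    by simp
  then have "((\<lambda>v. c \<bar>u - v\<bar>) has_integral C (u - s) - C 0) {s..u}"
    by (rule has_integral_eq[rotated]) auto
  moreover have "((\<lambda>v. C (v - u)) has_real_derivative c (x - u)) (at x)" for x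
  proof -
    have "((\<lambda>v. v - u) has_real_derivative 1) (at x)" by (auto intro!: derivative_eq_intros)
    from DERIV_chain2[OF C this] show ?thesis by simp
  qed
  then have "((\<lambda>v. c (v - u)) has_integral C (t - u) - C (u - u)) {u..t}"
    using assms(2) by (intro has_integral_real_FTC)
  then have "((\<lambda>v. c (v - u)) has_integral C (t - u) - C 0) {u..t}"
    by simp
  then have "((\<lambda>v. c \<bar>u - v\<bar>) has_integral C (t - u) - C 0) {u..t}"
    by (rule has_integral_eq[rotated]) auto
  ultimately show ?thesis
    using has_integral_combine[OF assms] by fastforce
qed

context
  fixes C2 :: "real \<Rightarrow> real"
  assumes C2: "\<And>x. (C2 has_real_derivative C x) (at x)"
begin

lemma has_integral_shifted_primitives:
  assumes "s \<le> t"
  shows "((\<lambda>u. C (u - s) + C (t - u) - 2 * C 0) has_integral 2 * (C2 (t - s) - C2 0 - (t - s) * C 0)) {s..t}"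
proof -
  have "((\<lambda>u. C (u - s) + C (t - u) - 2 * C 0) has_integral
      (C2 (t - s) - C2 (t - t) - 2 * C 0 * t) - (C2 (s - s) - C2 (t - s) - 2 * C 0 * s)) {s..t}"
    using assms by (intro has_integral_real_FTC)
      (auto intro!: derivative_eq_intros DERIV_chain2[OF C2])
  then show ?thesis by (simp add: algebra_simps)
qed

lemma has_integral_linear_weight:
  assumes "0 \<le> T"
  shows "((\<lambda>x. (T - x) * c x) has_integral C2 T - C2 0 - T * C 0) {0..T}"
proof -
  have "((\<lambda>x. (T - x) * c x) has_integral
      ((T - T) * C T + C2 T) - ((T - 0) * C 0 + C2 0)) {0..T}"
    using assms by (intro has_integral_real_FTC)
      (auto intro!: derivative_eq_intros C C2 simp: algebra_simps)
  then show ?thesis by (simp add: algebra_simps)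
qed

end

end

context
  fixes c :: "real \<Rightarrow> real"
  assumes c: "continuous_on UNIV c"
begin

lemma set_integral_abs_diff_kernel_endpoints:
  assumes "s \<le> t"
  shows "(LBINT v:{s..t}. c \<bar>t - v\<bar>) = (LBINT v:{s..t}. c \<bar>s - v\<bar>)"
proof -
  obtain C where C: "\<And>x. (C has_real_derivative c x) (at x)"
    using continuous_on_UNIV_has_primitive[OF c] by blast
  have "continuous_on {s..t} (\<lambda>v. c \<bar>u - v\<bar>)" for u
    by (intro continuous_on_compose2[OF c] continuous_intros) auto
  then show ?thesis
    using has_integral_abs_diff_kernel[OF C, of s t t] has_integral_abs_diff_kernel[OF C, of s s t] assms
    by (simp add: set_integral_Icc_eq_integral integral_unique)
qed

lemma set_integral_double_abs_diff_kernel: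
  assumes "s \<le> t"
  shows "(LBINT u:{s..t}. LBINT v:{s..t}. c \<bar>u - v\<bar>) = 2 * (LBINT x:{0..t - s}. (t - s - x) * c x)"
proof -
  obtain C where C: "\<And>x. (C has_real_derivative c x) (at x)"
    using continuous_on_UNIV_has_primitive[OF c] by blast
  have "continuous_on UNIV C"
    using C by (meson DERIV_continuous continuous_at_imp_continuous_on)
  then obtain C2 where C2: "\<And>x. (C2 has_real_derivative C x) (at x)"
    using continuous_on_UNIV_has_primitive by blast
  have inner: "(LBINT v:{s..t}. c \<bar>u - v\<bar>) = C (u - s) + C (t - u) - 2 * C 0" if "u \<in> {s..t}" for u
  proof -
    have "continuous_on {s..t} (\<lambda>v. c \<bar>u - v\<bar>)"
      by (intro continuous_on_compose2[OF c] continuous_intros) auto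
    then show ?thesis
      using has_integral_abs_diff_kernel[OF C, of s u t] that
      by (simp add: set_integral_Icc_eq_integral integral_unique)
  qed
  have "(LBINT u:{s..t}. LBINT v:{s..t}. c \<bar>u - v\<bar>) = (LBINT u:{s..t}. C (u - s) + C (t - u) - 2 * C 0)"
    using inner by (intro set_lebesgue_integral_cong) auto
  also have "\<dots> = 2 * (C2 (t - s) - C2 0 - (t - s) * C 0)"
    using \<open>continuous_on UNIV C\<close> has_integral_shifted_primitives[OF C C2 assms]
    by (subst set_integral_Icc_eq_integral)
      (auto intro!: continuous_on_compose2[of UNIV C] continuous_intros integral_unique)
  also have "\<dots> = 2 * (LBINT x:{0..t - s}. (t - s - x) * c x)"
    using has_integral_linear_weight[OF C C2, of "t - s"] assms
    by (subst set_integral_Icc_eq_integral)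
      (auto intro!: continuous_intros continuous_on_subset[OF c] simp: integral_unique)
  finally show ?thesis .
qed

end

section \<open>Second moments of wide-sense stationary processes\<close>

lemma integrable_mult_of_square_integrable:
  fixes X Y :: "'a \<Rightarrow> real"
  assumes [measurable]: "X \<in> borel_measurable M" "Y \<in> borel_measurable M"
    and X2: "integrable M (\<lambda>\<omega>. (X \<omega>)\<^sup>2)" and Y2: "integrable M (\<lambda>\<omega>. (Y \<omega>)\<^sup>2)"
  shows "integrable M (\<lambda>\<omega>. X \<omega> * Y \<omega>)"
    and "(\<integral>\<omega>. \<bar>X \<omega> * Y \<omega>\<bar> \<partial>M) \<le> (\<integral>\<omega>. (X \<omega>)\<^sup>2 \<partial>M) + (\<integral>\<omega>. (Y \<omega>)\<^sup>2 \<partial>M)"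
proof -
  have bound: "\<bar>x * y\<bar> \<le> x\<^sup>2 + y\<^sup>2" for x y :: real
  proof -
    have "2 * (\<bar>x\<bar> * \<bar>y\<bar>) \<le> x\<^sup>2 + y\<^sup>2"
      using sum_squares_bound[of "\<bar>x\<bar>" "\<bar>y\<bar>"] by (simp add: power2_abs mult.assoc)
    moreover have "0 \<le> \<bar>x\<bar> * \<bar>y\<bar>" by simp
    ultimately show ?thesis unfolding abs_mult by linarith
  qed
  have sum: "integrable M (\<lambda>\<omega>. (X \<omega>)\<^sup>2 + (Y \<omega>)\<^sup>2)" using X2 Y2 by simp
  show XY: "integrable M (\<lambda>\<omega>. X \<omega> * Y \<omega>)"
    using sum by (rule Bochner_Integration.integrable_bound) (use bound in \<open>auto intro!: AE_I2\<close>)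
  have "(\<integral>\<omega>. \<bar>X \<omega> * Y \<omega>\<bar> \<partial>M) \<le> (\<integral>\<omega>. (X \<omega>)\<^sup>2 + (Y \<omega>)\<^sup>2 \<partial>M)"
    by (rule integral_mono[OF integrable_abs[OF XY] sum]) (rule bound)
  then show "(\<integral>\<omega>. \<bar>X \<omega> * Y \<omega>\<bar> \<partial>M) \<le> (\<integral>\<omega>. (X \<omega>)\<^sup>2 \<partial>M) + (\<integral>\<omega>. (Y \<omega>)\<^sup>2 \<partial>M)"
    using X2 Y2 by simp
qed

lemma set_integral_square_le:
  fixes f :: "real \<Rightarrow> real"
  assumes st: "s \<le> t" and f: "continuous_on {s..t} f"
  shows "(LBINT u:{s..t}. f u)\<^sup>2 \<le> (t - s) * (LBINT u:{s..t}. (f u)\<^sup>2)"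
proof -
  have f2: "continuous_on {s..t} (\<lambda>u. (f u)\<^sup>2)" by (intro continuous_intros f)
  define A where "A = integral {s..t} f"
  define B where "B = integral {s..t} (\<lambda>u. (f u)\<^sup>2)"
  have "((\<lambda>u. ((t - s) * f u - A)\<^sup>2) has_integral
      (t - s)\<^sup>2 * B - 2 * (t - s) * A * A + A\<^sup>2 * (t - s)) {s..t}"
  proof -
    have "((\<lambda>u. (t - s)\<^sup>2 * (f u)\<^sup>2 - 2 * (t - s) * A * f u + A\<^sup>2) has_integral
        (t - s)\<^sup>2 * B - 2 * (t - s) * A * A + measure lborel {s..t} *\<^sub>R A\<^sup>2) {s..t}"
      unfolding A_def B_def
      by (intro has_integral_add has_integral_diff has_integral_mult_right has_integral_const_real
          integrable_integral integrable_continuous_real f f2)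
    then show ?thesis
      using st by (simp add: power2_eq_square algebra_simps)
  qed
  then have "0 \<le> (t - s)\<^sup>2 * B - 2 * (t - s) * A * A + A\<^sup>2 * (t - s)"
    by (rule has_integral_nonneg) simp
  then have "0 \<le> (t - s) * ((t - s) * B - A\<^sup>2)"
    by (simp add: power2_eq_square algebra_simps)
  then have "A\<^sup>2 \<le> (t - s) * B"
    using st by (cases "s = t") (auto simp: zero_le_mult_iff A_def)
  then show ?thesis
    using f f2 by (simp add: A_def B_def set_integral_Icc_eq_integral)
qed

lemma LIMSEQ_floor_scaled: "(\<lambda>n. \<lfloor>real (Suc n) * u\<rfloor> / real (Suc n)) \<longlonglongrightarrow> u"
proof (rule real_tendsto_sandwich[where f = "\<lambda>n. u - 1 / real (Suc n)" and h = "\<lambda>_. u"])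
  have "u - 1 / real (Suc n) = (real (Suc n) * u - 1) / real (Suc n)" for n
    by (simp add: field_simps)
  also have "\<dots> n \<le> \<lfloor>real (Suc n) * u\<rfloor> / real (Suc n)" for n
    by (intro divide_right_mono) linarith+
  finally show "\<forall>\<^sub>F n in sequentially. u - 1 / real (Suc n) \<le> \<lfloor>real (Suc n) * u\<rfloor> / real (Suc n)"
    by simp
  have "\<lfloor>real (Suc n) * u\<rfloor> / real (Suc n) \<le> real (Suc n) * u / real (Suc n)" for n
    by (intro divide_right_mono) linarith+
  then show "\<forall>\<^sub>F n in sequentially. \<lfloor>real (Suc n) * u\<rfloor> / real (Suc n) \<le> u"
    by simp
  show "(\<lambda>n. u - 1 / real (Suc n)) \<longlonglongrightarrow> u"
    using tendsto_diff[OF tendsto_const LIMSEQ_Suc[OF lim_const_over_n[of 1]]] by simp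
qed simp

text \<open>A real process with measurable marginals and continuous paths is jointly measurable:
  it is the pointwise limit of its evaluations on the grids of mesh 1 / (n + 1).\<close>
lemma measurable_process_of_continuous_paths:
  fixes X :: "real \<Rightarrow> 'a \<Rightarrow> real"
  assumes X: "\<And>u. X u \<in> borel_measurable M"
    and paths: "\<And>\<omega>. \<omega> \<in> space M \<Longrightarrow> continuous_on UNIV (\<lambda>u. X u \<omega>)"
  shows "(\<lambda>p. X (fst p) (snd p)) \<in> borel_measurable (lborel \<Otimes>\<^sub>M M)"
proof (rule borel_measurable_LIMSEQ_real)
  let ?grid = "\<lambda>n u. \<lfloor>real (Suc n) * u\<rfloor> / real (Suc n)"
  show "(\<lambda>p. X (?grid n (fst p)) (snd p)) \<in> borel_measurable (lborel \<Otimes>\<^sub>M M)" for n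
  proof -
    have grid_values: "(\<lambda>p. X (i / real (Suc n)) (snd p)) \<in> borel_measurable (lborel \<Otimes>\<^sub>M M)"
      if "i \<in> UNIV" for i :: int
      using X by measurable
    have "(\<lambda>p. \<lfloor>real (Suc n) * fst p\<rfloor>) \<in> lborel \<Otimes>\<^sub>M M \<rightarrow>\<^sub>M count_space UNIV"
      by measurable
    from measurable_compose_countable'[OF grid_values this] show ?thesis
      by (simp add: countableI_type)
  qed
  show "(\<lambda>n. X (?grid n (fst p)) (snd p)) \<longlonglongrightarrow> X (fst p) (snd p)" if "p \<in> space (lborel \<Otimes>\<^sub>M M)" for p
    using that paths[of "snd p"] LIMSEQ_floor_scaled[of "fst p"]
    by (auto simp: space_pair_measure continuous_on_eq_continuous_at intro: isCont_tendsto_compose)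
qed

lemma (in sigma_finite_measure) Fubini_set_integral_Icc:
  fixes P :: "real \<Rightarrow> 'a \<Rightarrow> real"
  assumes P: "(\<lambda>p. P (fst p) (snd p)) \<in> borel_measurable (lborel \<Otimes>\<^sub>M M)"
    and integrable_P: "\<And>u. u \<in> {s..t} \<Longrightarrow> integrable M (P u)"
    and bound: "\<And>u. u \<in> {s..t} \<Longrightarrow> (\<integral>\<omega>. \<bar>P u \<omega>\<bar> \<partial>M) \<le> B"
  shows "integrable M (\<lambda>\<omega>. LBINT u:{s..t}. P u \<omega>)"
    and "(\<integral>\<omega>. (LBINT u:{s..t}. P u \<omega>) \<partial>M) = (LBINT u:{s..t}. \<integral>\<omega>. P u \<omega> \<partial>M)"
proof -
  interpret pair_sigma_finite lborel M ..
  define f where "f u \<omega> = indicator {s..t} u * P u \<omega>" for u \<omega>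
  have [measurable]: "(\<lambda>(u, \<omega>). f u \<omega>) \<in> borel_measurable (lborel \<Otimes>\<^sub>M M)"
    unfolding f_def case_prod_beta using P by measurable
  have "integrable lborel (\<lambda>u. indicator {s..t} u * B)"
    using borel_integrable_atLeastAtMost'[of s t "\<lambda>_. B"] by (simp add: set_integrable_def)
  moreover have "(\<lambda>u. \<integral>\<omega>. norm ((\<lambda>(u, \<omega>). f u \<omega>) (u, \<omega>)) \<partial>M) \<in> borel_measurable lborel"
    by measurable
  ultimately have "integrable lborel (\<lambda>u. \<integral>\<omega>. norm ((\<lambda>(u, \<omega>). f u \<omega>) (u, \<omega>)) \<partial>M)"
    by (rule Bochner_Integration.integrable_bound)
      (auto simp: f_def indicator_def intro!: AE_I2 order_trans[OF bound abs_ge_self])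
  moreover have "AE u in lborel. integrable M (\<lambda>\<omega>. (\<lambda>(u, \<omega>). f u \<omega>) (u, \<omega>))"
    using integrable_P by (auto simp: f_def indicator_def intro!: AE_I2)
  ultimately have f: "integrable (lborel \<Otimes>\<^sub>M M) (\<lambda>(u, \<omega>). f u \<omega>)"
    by (intro Fubini_integrable) auto
  have inner: "(\<integral>u. f u \<omega> \<partial>lborel) = (LBINT u:{s..t}. P u \<omega>)" for \<omega>
    by (simp add: f_def set_lebesgue_integral_def)
  show "integrable M (\<lambda>\<omega>. LBINT u:{s..t}. P u \<omega>)"
    using integrable_snd[OF f] unfolding inner .
  show "(\<integral>\<omega>. (LBINT u:{s..t}. P u \<omega>) \<partial>M) = (LBINT u:{s..t}. \<integral>\<omega>. P u \<omega> \<partial>M)"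
    using Fubini_integral[OF f] unfolding inner by (simp add: f_def set_lebesgue_integral_def)
qed

locale wide_sense_stationary = prob_space M for M :: "'a measure" +
  fixes U :: "real \<Rightarrow> 'a \<Rightarrow> real" and c :: "real \<Rightarrow> real"
  assumes measurable_U [measurable]: "\<And>u. U u \<in> borel_measurable M"
    and continuous_paths: "\<And>\<omega>. \<omega> \<in> space M \<Longrightarrow> continuous_on UNIV (\<lambda>u. U u \<omega>)"
    and square_integrable: "\<And>u. integrable M (\<lambda>\<omega>. (U u \<omega>)\<^sup>2)"
    and covariance: "\<And>u v. (\<integral>\<omega>. U u \<omega> * U v \<omega> \<partial>M) = c \<bar>u - v\<bar>"
    and continuous_covariance: "continuous_on UNIV c"
begin

lemma measurable_U_joint [measurable]: "(\<lambda>p. U (fst p) (snd p)) \<in> borel_measurable (lborel \<Otimes>\<^sub>M M)"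
  by (rule measurable_process_of_continuous_paths[OF measurable_U continuous_paths])

lemma second_moment: "(\<integral>\<omega>. (U u \<omega>)\<^sup>2 \<partial>M) = c 0"
  using covariance[of u u] by (simp add: power2_eq_square)

lemma measurable_set_integral_U [measurable]: "(\<lambda>\<omega>. LBINT u:{s..t}. U u \<omega>) \<in> borel_measurable M"
proof -
  have "(\<lambda>p. U (snd p) (fst p)) = (\<lambda>(x, y). U (fst (y, x)) (snd (y, x)))"
    by auto
  then have [measurable]: "(\<lambda>p. U (snd p) (fst p)) \<in> borel_measurable (M \<Otimes>\<^sub>M lborel)"
    using measurable_pair_swap[OF measurable_U_joint] by (simp only:)
  show ?thesis unfolding set_lebesgue_integral_def by measurable
qed

lemma integral_mult_set_integral_U:
  assumes [measurable]: "X \<in> borel_measurable M" and X2: "integrable M (\<lambda>\<omega>. (X \<omega>)\<^sup>2)"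
  shows "integrable M (\<lambda>\<omega>. X \<omega> * (LBINT u:{s..t}. U u \<omega>))"
    and "(\<integral>\<omega>. X \<omega> * (LBINT u:{s..t}. U u \<omega>) \<partial>M) = (LBINT u:{s..t}. \<integral>\<omega>. X \<omega> * U u \<omega> \<partial>M)"
proof -
  have "(\<integral>\<omega>. \<bar>X \<omega> * U u \<omega>\<bar> \<partial>M) \<le> (\<integral>\<omega>. (X \<omega>)\<^sup>2 \<partial>M) + c 0" for u
    using integrable_mult_of_square_integrable(2)[OF _ measurable_U X2 square_integrable]
    by (simp add: second_moment)
  moreover have "integrable M (\<lambda>\<omega>. X \<omega> * U u \<omega>)" for u
    by (rule integrable_mult_of_square_integrable(1)[OF _ measurable_U X2 square_integrable]) simp
  moreover have "(\<lambda>p. X (snd p) * U (fst p) (snd p)) \<in> borel_measurable (lborel \<Otimes>\<^sub>M M)"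
    by measurable
  ultimately show "integrable M (\<lambda>\<omega>. X \<omega> * (LBINT u:{s..t}. U u \<omega>))"
    and "(\<integral>\<omega>. X \<omega> * (LBINT u:{s..t}. U u \<omega>) \<partial>M) = (LBINT u:{s..t}. \<integral>\<omega>. X \<omega> * U u \<omega> \<partial>M)"
    using Fubini_set_integral_Icc[of "\<lambda>u \<omega>. X \<omega> * U u \<omega>" s t "(\<integral>\<omega>. (X \<omega>)\<^sup>2 \<partial>M) + c 0"]
    by simp_all
qed

lemma square_integrable_set_integral_U:
  assumes "s \<le> t"
  shows "integrable M (\<lambda>\<omega>. (LBINT u:{s..t}. U u \<omega>)\<^sup>2)"
proof (rule Bochner_Integration.integrable_bound)
  have "(\<lambda>p. (U (fst p) (snd p))\<^sup>2) \<in> borel_measurable (lborel \<Otimes>\<^sub>M M)"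
    by measurable
  then have "integrable M (\<lambda>\<omega>. LBINT u:{s..t}. (U u \<omega>)\<^sup>2)"
    using square_integrable second_moment
    by (intro Fubini_set_integral_Icc(1)[where B = "c 0"]) auto
  then show "integrable M (\<lambda>\<omega>. (t - s) * (LBINT u:{s..t}. (U u \<omega>)\<^sup>2))"
    by simp
  show "AE \<omega> in M. norm ((LBINT u:{s..t}. U u \<omega>)\<^sup>2) \<le> norm ((t - s) * (LBINT u:{s..t}. (U u \<omega>)\<^sup>2))"
    using set_integral_square_le[OF assms continuous_on_subset[OF continuous_paths]]
    by (auto intro!: AE_I2 order_trans[OF _ abs_ge_self])
qed simp

lemma covariance_set_integral_U:
  "(\<integral>\<omega>. U r \<omega> * (LBINT u:{s..t}. U u \<omega>) \<partial>M) = (LBINT v:{s..t}. c \<bar>r - v\<bar>)"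
  using integral_mult_set_integral_U(2)[OF measurable_U square_integrable, of r s t]
  by (simp add: covariance)

lemma second_moment_set_integral_U:
  assumes st: "s \<le> t"
  shows "(\<integral>\<omega>. (LBINT u:{s..t}. U u \<omega>)\<^sup>2 \<partial>M) = 2 * (LBINT x:{0..t - s}. (t - s - x) * c x)"
proof -
  have "(\<integral>\<omega>. (LBINT u:{s..t}. U u \<omega>)\<^sup>2 \<partial>M)
      = (LBINT u:{s..t}. \<integral>\<omega>. (LBINT v:{s..t}. U v \<omega>) * U u \<omega> \<partial>M)"
    using integral_mult_set_integral_U(2)[OF measurable_set_integral_U square_integrable_set_integral_U[OF st]]
    by (simp add: power2_eq_square)
  also have "\<dots> = (LBINT u:{s..t}. LBINT v:{s..t}. c \<bar>u - v\<bar>)"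
    using covariance_set_integral_U by (simp add: mult.commute)
  also have "\<dots> = 2 * (LBINT x:{0..t - s}. (t - s - x) * c x)"
    by (rule set_integral_double_abs_diff_kernel[OF continuous_covariance st])
  finally show ?thesis .
qed

text \<open>The cross terms cancel because c \<bar>t - v\<bar> and c \<bar>s - v\<bar> have the same integral over [s, t].\<close>
lemma second_moment_increment:
  assumes st: "s \<le> t"
  defines "I \<equiv> \<lambda>\<omega>. LBINT u:{s..t}. U u \<omega>"
  shows "integrable M (\<lambda>\<omega>. (U t \<omega> - U s \<omega> + \<alpha> * I \<omega>)\<^sup>2)"
    and "(\<integral>\<omega>. (U t \<omega> - U s \<omega> + \<alpha> * I \<omega>)\<^sup>2 \<partial>M)
      = 2 * (c 0 - c (t - s)) + 2 * \<alpha>\<^sup>2 * (LBINT x:{0..t - s}. (t - s - x) * c x)"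
proof -
  have UU: "integrable M (\<lambda>\<omega>. U u \<omega> * U v \<omega>)" for u v
    by (rule integrable_mult_of_square_integrable(1)[OF measurable_U measurable_U square_integrable square_integrable])
  have UI: "integrable M (\<lambda>\<omega>. U r \<omega> * I \<omega>)" for r
    unfolding I_def by (rule integral_mult_set_integral_U(1)[OF measurable_U square_integrable])
  have II: "integrable M (\<lambda>\<omega>. (I \<omega>)\<^sup>2)"
    unfolding I_def by (rule square_integrable_set_integral_U[OF st])
  define T1 where "T1 \<omega> = U t \<omega> * U t \<omega> + U s \<omega> * U s \<omega> - 2 * (U t \<omega> * U s \<omega>)" for \<omega>
  define T2 where "T2 \<omega> = 2 * \<alpha> * (U t \<omega> * I \<omega>) - 2 * \<alpha> * (U s \<omega> * I \<omega>)" for \<omega>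
  define T3 where "T3 \<omega> = \<alpha>\<^sup>2 * (I \<omega>)\<^sup>2" for \<omega>
  have expand: "(\<lambda>\<omega>. (U t \<omega> - U s \<omega> + \<alpha> * I \<omega>)\<^sup>2) = (\<lambda>\<omega>. T1 \<omega> + T2 \<omega> + T3 \<omega>)"
    by (simp add: T1_def T2_def T3_def power2_eq_square algebra_simps)
  have T1: "integrable M T1" "integral\<^sup>L M T1 = 2 * (c 0 - c (t - s))"
    unfolding T1_def using UU st by (simp_all add: covariance)
  have T2: "integrable M T2" "integral\<^sup>L M T2 = 0"
    unfolding T2_def using UI
    by (simp_all add: I_def covariance_set_integral_U set_integral_abs_diff_kernel_endpoints[OF continuous_covariance st])
  have T3: "integrable M T3" "integral\<^sup>L M T3 = 2 * \<alpha>\<^sup>2 * (LBINT x:{0..t - s}. (t - s - x) * c x)"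
    unfolding T3_def using II by (simp_all add: I_def second_moment_set_integral_U[OF st])
  show "integrable M (\<lambda>\<omega>. (U t \<omega> - U s \<omega> + \<alpha> * I \<omega>)\<^sup>2)"
    unfolding expand using T1 T2 T3 by simp
  show "(\<integral>\<omega>. (U t \<omega> - U s \<omega> + \<alpha> * I \<omega>)\<^sup>2 \<partial>M)
      = 2 * (c 0 - c (t - s)) + 2 * \<alpha>\<^sup>2 * (LBINT x:{0..t - s}. (t - s - x) * c x)"
    unfolding expand using T1 T2 T3 by simp
qed

end

section \<open>The covariance of the time-changed process and the kernel k\<close>

locale fOU_parameters =
  fixes \<alpha> H :: real
  assumes H_gt: "1/2 < H" and H_lt: "H < 1" and \<alpha>_pos: "0 < \<alpha>"
begin

lemma H_pos: "0 < H"
  using H_gt by simp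

text \<open>cov is the covariance of exp (- \<alpha> u) * Z (time_change u) for a fractional Brownian motion Z,
  see cov_time_change below, and cov_deriv is its derivative on (0, \<infinity>).\<close>
definition cov :: "real \<Rightarrow> real" where
  "cov x = (H / \<alpha>) powr (2 * H) / 2
     * (exp (\<alpha> * x) + exp (- \<alpha> * x) - exp (\<alpha> * x) * \<bar>1 - exp (- \<alpha> * x / H)\<bar> powr (2 * H))"

definition cov_deriv :: "real \<Rightarrow> real" where
  "cov_deriv x = (H / \<alpha>) powr (2 * H) / 2
     * (\<alpha> * exp (\<alpha> * x) - \<alpha> * exp (- \<alpha> * x)
        - \<alpha> * exp (\<alpha> * x) * (\<bar>1 - exp (- \<alpha> * x / H)\<bar> powr (2 * H)
            + 2 * exp (- \<alpha> * x / H) * \<bar>1 - exp (- \<alpha> * x / H)\<bar> powr (2 * H - 1)))"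

definition time_change :: "real \<Rightarrow> real" where
  "time_change u = H * exp (\<alpha> * u / H) / \<alpha>"

lemma time_change_pos: "0 < time_change u"
  using H_pos \<alpha>_pos by (simp add: time_change_def)

lemma continuous_time_change: "continuous_on UNIV time_change"
  unfolding time_change_def by (intro continuous_intros) (use H_pos \<alpha>_pos in auto)

lemma cov_time_change:
  "exp (- \<alpha> * u) * exp (- \<alpha> * v)
     * ((time_change u powr (2 * H) + time_change v powr (2 * H) - \<bar>time_change u - time_change v\<bar> powr (2 * H)) / 2)
   = cov \<bar>u - v\<bar>"
proof -
  define K where "K = (H / \<alpha>) powr (2 * H)"
  have time_change_powr: "time_change w powr (2 * H) = K * exp (2 * \<alpha> * w)" for w
  proof -
    have "H * exp (\<alpha> * w / H) / \<alpha> = H / \<alpha> * exp (\<alpha> * w / H)"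
      by simp
    then have "time_change w powr (2 * H) = K * exp (\<alpha> * w / H) powr (2 * H)"
      unfolding time_change_def K_def using H_pos \<alpha>_pos by (simp only:) (rule powr_mult; simp)
    also have "exp (\<alpha> * w / H) powr (2 * H) = exp (2 * \<alpha> * w)"
      using H_pos by (simp add: exp_powr_real field_simps)
    finally show ?thesis .
  qed
  have ordered: "exp (- \<alpha> * u) * exp (- \<alpha> * v)
     * ((time_change u powr (2 * H) + time_change v powr (2 * H) - \<bar>time_change u - time_change v\<bar> powr (2 * H)) / 2)
     = cov (u - v)" if vu: "v \<le> u" for u v
  proof -
    define d where "d = 1 - exp (- \<alpha> * (u - v) / H)"
    have d: "0 \<le> d"
      using vu \<alpha>_pos H_pos by (simp add: d_def)
    have "time_change u - time_change v = time_change u * d"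
    proof -
      have "exp (\<alpha> * u / H) * exp (- \<alpha> * (u - v) / H) = exp (\<alpha> * v / H)"
        by (simp add: exp_add[symmetric] diff_divide_distrib algebra_simps)
      then show ?thesis
        by (simp add: time_change_def d_def algebra_simps)
    qed
    then have abs_diff: "\<bar>time_change u - time_change v\<bar> powr (2 * H) = K * exp (2 * \<alpha> * u) * d powr (2 * H)"
      using time_change_pos[of u] d by (simp add: abs_mult powr_mult time_change_powr)
    have "exp (- \<alpha> * u) * exp (- \<alpha> * v)
        * ((time_change u powr (2 * H) + time_change v powr (2 * H) - \<bar>time_change u - time_change v\<bar> powr (2 * H)) / 2)
      = K / 2 * (exp (- \<alpha> * u) * exp (- \<alpha> * v) * exp (2 * \<alpha> * u)
          + exp (- \<alpha> * u) * exp (- \<alpha> * v) * exp (2 * \<alpha> * v)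
          - exp (- \<alpha> * u) * exp (- \<alpha> * v) * exp (2 * \<alpha> * u) * d powr (2 * H))"
      unfolding time_change_powr abs_diff by (simp add: field_simps)
    also have "\<dots> = cov (u - v)"
      using d by (simp add: cov_def K_def d_def exp_add[symmetric] algebra_simps)
    finally show ?thesis .
  qed
  show ?thesis
    using ordered[of v u] ordered[of u v]
    by (cases "v \<le> u") (simp_all add: abs_minus_commute mult.commute add.commute)
qed

lemma continuous_abs_powr: "0 < r \<Longrightarrow> continuous_on UNIV (\<lambda>x. \<bar>1 - exp (- \<alpha> * x / H)\<bar> powr r)"
  using H_pos by (intro continuous_on_powr' continuous_intros) auto

lemma continuous_cov: "continuous_on UNIV cov"
  unfolding cov_def using H_gt
  by (intro continuous_on_mult continuous_on_add continuous_on_diff continuous_on_const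
      continuous_abs_powr continuous_intros) auto

lemma continuous_cov_deriv: "continuous_on UNIV cov_deriv"
  unfolding cov_deriv_def using H_gt
  by (intro continuous_on_mult continuous_on_add continuous_on_diff continuous_on_const
      continuous_abs_powr continuous_intros) auto

lemma cov_deriv_0: "cov_deriv 0 = 0"
  by (simp add: cov_deriv_def)

lemma C_const_eq: "C_const \<alpha> H = H * (2 * H - 1) * ((\<alpha> / H)\<^sup>2 * (H / \<alpha>) powr (2 * H))"
proof -
  have "(\<alpha> / H) powr (2 * (1 - H)) = (\<alpha> / H) powr 2 * (\<alpha> / H) powr (- (2 * H))"
    by (simp add: powr_add[symmetric] algebra_simps)
  also have "\<dots> = (\<alpha> / H)\<^sup>2 * (H / \<alpha>) powr (2 * H)"
    using \<alpha>_pos H_pos by (simp add: powr_minus powr_divide powr_numeral power_divide)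
  finally show ?thesis
    unfolding C_const_def by (simp only:)
qed

lemma has_real_derivative_powr_one_minus_exp:
  assumes "0 < x"
  shows "((\<lambda>y. (1 - exp (- \<alpha> * y / H)) powr r) has_real_derivative
      r * (1 - exp (- \<alpha> * x / H)) powr (r - 1) * (\<alpha> / H * exp (- \<alpha> * x / H))) (at x)"
proof -
  have "((\<lambda>y. 1 - exp (- \<alpha> * y / H)) has_real_derivative \<alpha> / H * exp (- \<alpha> * x / H)) (at x)"
    using H_pos by (auto intro!: derivative_eq_intros simp: field_simps)
  moreover have "0 < 1 - exp (- \<alpha> * x / H)"
    using assms \<alpha>_pos H_pos by simp
  ultimately show ?thesis
    using DERIV_fun_powr by fastforce
qed

lemma has_real_derivative_cov:
  assumes x: "0 < x"
  shows "(cov has_real_derivative cov_deriv x) (at x)"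
proof -
  define K where "K = (H / \<alpha>) powr (2 * H) / 2"
  define q where "q y = 1 - exp (- \<alpha> * y / H)" for y
  have q_pos: "0 < q y" if "0 < y" for y
    using that \<alpha>_pos H_pos by (simp add: q_def)
  have dq: "((\<lambda>y. q y powr (2 * H)) has_real_derivative
      2 * H * q x powr (2 * H - 1) * (\<alpha> / H * exp (- \<alpha> * x / H))) (at x)"
    unfolding q_def by (rule has_real_derivative_powr_one_minus_exp[OF x])
  have "((\<lambda>y. K * (exp (\<alpha> * y) + exp (- \<alpha> * y) - exp (\<alpha> * y) * q y powr (2 * H)))
      has_real_derivative K * (\<alpha> * exp (\<alpha> * x) - \<alpha> * exp (- \<alpha> * x)
        - (\<alpha> * exp (\<alpha> * x) * q x powr (2 * H)
           + exp (\<alpha> * x) * (2 * H * q x powr (2 * H - 1) * (\<alpha> / H * exp (- \<alpha> * x / H)))))) (at x)"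
    (is "(?cov has_real_derivative ?D) _")
    by (rule derivative_eq_intros dq refl | simp)+
  moreover have "?D = cov_deriv x"
  proof -
    have "\<bar>1 - exp (- \<alpha> * x / H)\<bar> = q x"
      using q_pos[OF x] by (simp add: q_def)
    then show ?thesis
      unfolding cov_deriv_def K_def[symmetric] using H_pos by (simp add: field_simps)
  qed
  ultimately have "(?cov has_real_derivative cov_deriv x) (at x)"
    by simp
  then show ?thesis
    by (rule has_field_derivative_transform_within_open[where S = "{0<..}"])
      (use x q_pos in \<open>auto simp: cov_def K_def q_def abs_of_pos\<close>)
qed

text \<open>The equation cov'' = \<alpha>^2 cov - k on (0, \<infinity>); it is what turns the second moments into
  integrals of k.\<close>
lemma has_real_derivative_cov_deriv:
  assumes x: "0 < x"
  shows "(cov_deriv has_real_derivative \<alpha>\<^sup>2 * cov x - k_fun \<alpha> H x) (at x)"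
proof -
  define K where "K = (H / \<alpha>) powr (2 * H) / 2"
  define E where "E = exp (- \<alpha> * x / H)"
  define q where "q y = 1 - exp (- \<alpha> * y / H)" for y
  define P where "P r y = q y powr r" for r y
  have q_pos: "0 < q y" if "0 < y" for y
    using that \<alpha>_pos H_pos by (simp add: q_def)
  have dP: "(P r has_real_derivative r * P (r - 1) x * (\<alpha> / H * exp (- \<alpha> * x / H))) (at x)" for r
    unfolding P_def q_def by (rule has_real_derivative_powr_one_minus_exp[OF x])
  have P2: "P (2 * H) x = (q x)\<^sup>2 * P (2 * H - 2) x"
    using powr_add[of "q x" "2 * H - 2" 2] q_pos[OF x] by (simp add: P_def powr_numeral mult.commute)
  have P1: "P (2 * H - 1) x = q x * P (2 * H - 2) x"
    using powr_add[of "q x" "2 * H - 2" 1] q_pos[OF x] by (simp add: P_def mult.commute)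
  have qE: "q x = 1 - E" by (simp add: q_def E_def)
  have cov_x: "cov x = K * (exp (\<alpha> * x) + exp (- \<alpha> * x) - exp (\<alpha> * x) * P (2 * H) x)"
    using q_pos[OF x] by (simp add: cov_def K_def P_def q_def)
  have k_x: "k_fun \<alpha> H x = H * (2 * H - 1) * ((\<alpha> / H)\<^sup>2 * (2 * K)) * (exp (\<alpha> * x) * E) * P (2 * H - 2) x"
  proof -
    have "exp (- \<alpha> * (1 - H) * x / H) = exp (\<alpha> * x) * E"
      using H_pos by (simp add: E_def exp_add[symmetric] field_simps)
    then show ?thesis
      using q_pos[OF x] by (simp add: k_fun_def C_const_eq K_def P_def q_def E_def)
  qed
  have "((\<lambda>y. K * (\<alpha> * exp (\<alpha> * y) - \<alpha> * exp (- \<alpha> * y)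
        - \<alpha> * exp (\<alpha> * y) * (P (2 * H) y + 2 * exp (- \<alpha> * y / H) * P (2 * H - 1) y)))
      has_real_derivative
        (exp (\<alpha> * x) * \<alpha> * \<alpha> + exp (- \<alpha> * x) * \<alpha> * \<alpha>
          - (exp (\<alpha> * x) * \<alpha> * \<alpha> * (P (2 * H) x + 2 * E * P (2 * H - 1) x)
             + (2 * (P (2 * H - 1) x * (\<alpha> * E)) + ((2 * H - 1) * P (2 * H - 2) x * (\<alpha> * E) * (2 * E) / H
                - E * \<alpha> * 2 * P (2 * H - 1) x / H)) * (\<alpha> * exp (\<alpha> * x)))) * K) (at x)"
    (is "(?cov_deriv has_real_derivative ?D) _")
    using H_pos by (auto intro!: derivative_eq_intros dP simp: E_def)
  moreover have "?D = \<alpha>\<^sup>2 * cov x - k_fun \<alpha> H x"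
    unfolding cov_x k_x P2 P1 qE using H_pos by (simp add: field_simps power2_eq_square)
  ultimately have "(?cov_deriv has_real_derivative \<alpha>\<^sup>2 * cov x - k_fun \<alpha> H x) (at x)"
    by simp
  then show ?thesis
    by (rule has_field_derivative_transform_within_open[where S = "{0<..}"])
      (use x q_pos in \<open>auto simp: cov_deriv_def K_def P_def q_def abs_of_pos\<close>)
qed

lemma k_nonneg: "0 \<le> k_fun \<alpha> H x"
  using H_gt by (simp add: k_fun_def C_const_def)

lemma k_0: "k_fun \<alpha> H 0 = 0"
  by (simp add: k_fun_def)

lemma measurable_k [measurable]: "k_fun \<alpha> H \<in> borel_measurable borel"
  unfolding k_fun_def by measurable

lemma has_integral_weighted_k:
  assumes T: "0 \<le> T"
  shows "((\<lambda>x. (T - x) * k_fun \<alpha> H x) has_integral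
      cov 0 - cov T + \<alpha>\<^sup>2 * integral {0..T} (\<lambda>x. (T - x) * cov x)) {0..T}"
proof -
  have "continuous_on UNIV (\<lambda>x. (T - x) * cov x)"
    by (intro continuous_intros continuous_cov)
  then obtain Q where Q: "\<And>x. (Q has_real_derivative (T - x) * cov x) (at x)"
    using continuous_on_UNIV_has_primitive by blast
  define F where "F x = - (T - x) * cov_deriv x - cov x + \<alpha>\<^sup>2 * Q x" for x
  have "((\<lambda>x. (T - x) * k_fun \<alpha> H x) has_integral F T - F 0) {0..T}"
  proof (rule fundamental_theorem_of_calculus_interior[OF T])
    have "continuous_on UNIV Q"
      using Q by (meson DERIV_continuous continuous_at_imp_continuous_on)
    then have "continuous_on {0..T} Q"
      by (rule continuous_on_subset) simp
    then show "continuous_on {0..T} F"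
      unfolding F_def
      by (intro continuous_intros continuous_on_subset[OF continuous_cov_deriv]
          continuous_on_subset[OF continuous_cov]) auto
    fix x assume "x \<in> {0<..<T}"
    then have "(F has_real_derivative (T - x) * k_fun \<alpha> H x) (at x)"
      unfolding F_def
      by (auto intro!: derivative_eq_intros has_real_derivative_cov has_real_derivative_cov_deriv Q
          simp: algebra_simps)
    then show "(F has_vector_derivative (T - x) * k_fun \<alpha> H x) (at x)"
      by (simp add: has_real_derivative_iff_has_vector_derivative)
  qed
  moreover have "integral {0..T} (\<lambda>x. (T - x) * cov x) = Q T - Q 0"
    using has_integral_real_FTC[OF T, of Q] Q by (simp add: integral_unique)
  moreover have "F T - F 0 = cov 0 - cov T + \<alpha>\<^sup>2 * (Q T - Q 0)"
    by (simp add: F_def cov_deriv_0 algebra_simps)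
  ultimately show ?thesis
    by simp
qed

lemma set_integral_weighted_k:
  assumes "0 \<le> T"
  shows "set_integrable lborel {0..T} (\<lambda>x. (T - x) * k_fun \<alpha> H x)"
    and "(LBINT x:{0..T}. (T - x) * k_fun \<alpha> H x)
      = cov 0 - cov T + \<alpha>\<^sup>2 * (LBINT x:{0..T}. (T - x) * cov x)"
proof -
  have "continuous_on {0..T} (\<lambda>x. (T - x) * cov x)"
    by (intro continuous_intros continuous_on_subset[OF continuous_cov]) auto
  note * = set_integrable_lborel_of_nonneg_has_integral[OF has_integral_weighted_k[OF assms]]
  show "set_integrable lborel {0..T} (\<lambda>x. (T - x) * k_fun \<alpha> H x)"
    by (rule *(1)) (auto intro: k_nonneg mult_nonneg_nonneg)
  show "(LBINT x:{0..T}. (T - x) * k_fun \<alpha> H x)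
      = cov 0 - cov T + \<alpha>\<^sup>2 * (LBINT x:{0..T}. (T - x) * cov x)"
    using \<open>continuous_on {0..T} _\<close>
    by (subst *(2)) (auto intro: k_nonneg mult_nonneg_nonneg simp: set_integral_Icc_eq_integral)
qed

lemma k_le_exp:
  assumes x: "1 \<le> x"
  shows "k_fun \<alpha> H x \<le> C_const \<alpha> H * (1 - exp (- \<alpha> / H)) powr (2 * H - 2) * exp (- (x * (\<alpha> * (1 - H) / H)))"
proof -
  have "exp (- \<alpha> * x / H) \<le> exp (- \<alpha> / H)"
    using x \<alpha>_pos H_pos by (auto simp: divide_simps)
  moreover have "exp (- \<alpha> / H) < 1"
    using \<alpha>_pos H_pos by simp
  ultimately have "\<bar>1 - exp (- \<alpha> * x / H)\<bar> powr (2 * H - 2) \<le> (1 - exp (- \<alpha> / H)) powr (2 * H - 2)"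
    using H_lt by (intro powr_mono2') auto
  moreover have "0 \<le> C_const \<alpha> H * exp (- (x * (\<alpha> * (1 - H) / H)))"
    using H_gt by (simp add: C_const_def)
  ultimately have "C_const \<alpha> H * exp (- (x * (\<alpha> * (1 - H) / H))) * \<bar>1 - exp (- \<alpha> * x / H)\<bar> powr (2 * H - 2)
      \<le> C_const \<alpha> H * exp (- (x * (\<alpha> * (1 - H) / H))) * (1 - exp (- \<alpha> / H)) powr (2 * H - 2)"
    by (rule mult_left_mono)
  moreover have "exp (- \<alpha> * (1 - H) * x / H) = exp (- (x * (\<alpha> * (1 - H) / H)))"
    using H_pos by (simp add: field_simps)
  ultimately show ?thesis
    by (simp add: k_fun_def mult_ac)
qed

lemma set_integrable_k: "set_integrable lborel {0<..} (k_fun \<alpha> H)"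
proof -
  have "set_integrable lborel {0..1} (k_fun \<alpha> H)"
  proof (rule set_integrable_bound[OF set_integrable_subset[OF set_integral_weighted_k(1)[of 2]]])
    show "AE x in lborel. x \<in> {0..1} \<longrightarrow> norm (k_fun \<alpha> H x) \<le> norm ((2 - x) * k_fun \<alpha> H x)"
    proof (rule AE_I2, rule impI)
      fix x :: real assume "x \<in> {0..1}"
      then have "1 * k_fun \<alpha> H x \<le> (2 - x) * k_fun \<alpha> H x"
        by (intro mult_right_mono k_nonneg) auto
      then show "norm (k_fun \<alpha> H x) \<le> norm ((2 - x) * k_fun \<alpha> H x)"
        using k_nonneg[of x] by simp
    qed
    show "set_borel_measurable lborel {0..1} (k_fun \<alpha> H)"
      unfolding set_borel_measurable_def by measurable
  qed auto
  then have near_0: "set_integrable lborel {0<..1} (k_fun \<alpha> H)"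
    by (rule set_integrable_subset) auto
  have "0 < \<alpha> * (1 - H) / H"
    using \<alpha>_pos H_pos H_lt by simp
  from integrable_I0i_exp_mscale[OF this]
  have "set_integrable lborel {1<..} (\<lambda>x. C_const \<alpha> H * (1 - exp (- \<alpha> / H)) powr (2 * H - 2)
      * exp (- (x * (\<alpha> * (1 - H) / H))))"
    by (intro set_integrable_mult_right) (auto elim: set_integrable_subset)
  then have tail: "set_integrable lborel {1<..} (k_fun \<alpha> H)"
  proof (rule set_integrable_bound)
    show "set_borel_measurable lborel {1<..} (k_fun \<alpha> H)"
      unfolding set_borel_measurable_def by measurable
  qed (use k_le_exp k_nonneg in \<open>auto intro!: AE_I2 order_trans[OF _ abs_ge_self]\<close>)
  have "{0<..} = {0<..1} \<union> ({1<..} :: real set)" by auto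
  then show ?thesis
    using set_integrable_Un[OF near_0 tail] by simp
qed

lemma set_integral_weighted_k_le:
  assumes t: "0 \<le> t"
  shows "(LBINT x:{0..t}. (t - x) * k_fun \<alpha> H x) \<le> t * (LBINT x:{0<..}. k_fun \<alpha> H x)"
  unfolding set_lebesgue_integral_def
proof -
  have "(\<integral>x. indicator {0..t} x *\<^sub>R ((t - x) * k_fun \<alpha> H x) \<partial>lborel)
      \<le> (\<integral>x. indicator {0<..} x *\<^sub>R (t * k_fun \<alpha> H x) \<partial>lborel)"
  proof (rule integral_mono)
    show "integrable lborel (\<lambda>x. indicator {0..t} x *\<^sub>R ((t - x) * k_fun \<alpha> H x))"
      using set_integral_weighted_k(1)[OF t] by (simp add: set_integrable_def)
    show "integrable lborel (\<lambda>x. indicator {0<..} x *\<^sub>R (t * k_fun \<alpha> H x))"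
      using set_integrable_mult_right[OF set_integrable_k, of t] by (simp add: set_integrable_def)
    show "indicator {0..t} x *\<^sub>R ((t - x) * k_fun \<alpha> H x) \<le> indicator {0<..} x *\<^sub>R (t * k_fun \<alpha> H x)" for x
      using k_nonneg[of x] k_0 t by (cases "x = 0") (auto simp: indicator_def mult_right_mono)
  qed
  then show "(\<integral>x. indicator {0..t} x *\<^sub>R ((t - x) * k_fun \<alpha> H x) \<partial>lborel)
      \<le> t * (\<integral>x. indicator {0<..} x *\<^sub>R k_fun \<alpha> H x \<partial>lborel)"
    by (simp add: mult.left_commute)
qed

text \<open>For t \<ge> s the difference of the two weighted integrals is the integral of
  min s (t - x) * k x over 0 < x \<le> t; dominated convergence with majorant s * k.\<close>
lemma tendsto_set_integral_weighted_k_diff: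
  assumes s: "0 \<le> s"
  shows "((\<lambda>t. (LBINT x:{0..t}. (t - x) * k_fun \<alpha> H x) - (LBINT x:{0..t - s}. (t - s - x) * k_fun \<alpha> H x))
      \<longlongrightarrow> s * (LBINT x:{0<..}. k_fun \<alpha> H x)) at_top"
proof -
  define \<phi> where "\<phi> t = (\<lambda>x. indicator {0..t} x * ((t - x) * k_fun \<alpha> H x)
      - indicator {0..t - s} x * ((t - s - x) * k_fun \<alpha> H x))" for t :: real
  define f where "f = (\<lambda>x. indicator {0<..} x * (s * k_fun \<alpha> H x))"
  have diff: "(LBINT x:{0..t}. (t - x) * k_fun \<alpha> H x) - (LBINT x:{0..t - s}. (t - s - x) * k_fun \<alpha> H x)
      = integral\<^sup>L lborel (\<phi> t)" if "s \<le> t" for t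
    using set_integral_weighted_k(1)[of t] set_integral_weighted_k(1)[of "t - s"] that s
    by (simp add: \<phi>_def set_lebesgue_integral_def set_integrable_def Bochner_Integration.integral_diff)
  have "((\<lambda>t. integral\<^sup>L lborel (\<phi> t)) \<longlongrightarrow> integral\<^sup>L lborel f) at_top"
  proof (rule integral_dominated_convergence_at_top[where w = f])
    show "integrable lborel f"
      using set_integrable_mult_right[OF set_integrable_k, of s] by (simp add: f_def set_integrable_def)
    show "AE x in lborel. ((\<lambda>t. \<phi> t x) \<longlongrightarrow> f x) at_top"
    proof (rule AE_I2)
      fix x :: real
      have "\<forall>\<^sub>F t in at_top. \<phi> t x = f x"
      proof (cases "0 < x")
        case True
        show ?thesis
          using eventually_ge_at_top[of "x + s"]
          by eventually_elim (use True s in \<open>auto simp: \<phi>_def f_def indicator_def algebra_simps\<close>)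
      qed (use k_0 in \<open>cases "x = 0"; auto simp: \<phi>_def f_def indicator_def\<close>)
      then show "((\<lambda>t. \<phi> t x) \<longlongrightarrow> f x) at_top"
        by (rule tendsto_eventually)
    qed
    show "\<forall>\<^sub>F t in at_top. AE x in lborel. norm (\<phi> t x) \<le> f x"
      using eventually_ge_at_top[of s]
    proof eventually_elim
      case (elim t)
      show ?case
      proof (rule AE_I2)
        fix x
        have k: "0 \<le> k_fun \<alpha> H x" by (rule k_nonneg)
        consider "x < 0" | "x = 0" | "0 < x" "x \<le> t - s" | "t - s < x" "x \<le> t" | "t < x"
          by linarith
        then show "norm (\<phi> t x) \<le> f x"
        proof cases
          case 4
          then have "(t - x) * k_fun \<alpha> H x \<le> s * k_fun \<alpha> H x"
            using k by (intro mult_right_mono) auto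
          then show ?thesis using 4 k elim s by (simp add: \<phi>_def f_def)
        qed (use k k_0 elim s in \<open>auto simp: \<phi>_def f_def algebra_simps\<close>)
      qed
    qed
  qed (auto simp: \<phi>_def f_def)
  moreover have "integral\<^sup>L lborel f = s * (LBINT x:{0<..}. k_fun \<alpha> H x)"
    by (simp add: f_def set_lebesgue_integral_def mult.left_commute)
  moreover have "\<forall>\<^sub>F t in at_top. integral\<^sup>L lborel (\<phi> t)
      = (LBINT x:{0..t}. (t - x) * k_fun \<alpha> H x) - (LBINT x:{0..t - s}. (t - s - x) * k_fun \<alpha> H x)"
    using eventually_ge_at_top[of s] by eventually_elim (simp add: diff)
  ultimately show ?thesis
    using tendsto_cong by fastforce
qed

end

section \<open>The integral of e^(-\<alpha> s) against the time-changed fractional Brownian motion\<close>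

locale fOU_process = fOU_parameters \<alpha> H for \<alpha> H :: real +
  fixes M :: "'a measure" and Z :: "real \<Rightarrow> 'a \<Rightarrow> real"
  assumes fBm: "fBm M H Z"
    and continuous_Z: "\<And>\<omega>. \<omega> \<in> space M \<Longrightarrow> continuous_on {0..} (\<lambda>t. Z t \<omega>)"
begin

sublocale prob_space M
  using fBm by (simp add: fBm_def)

definition U :: "real \<Rightarrow> 'a \<Rightarrow> real" where
  "U u \<omega> = exp (- \<alpha> * u) * Z (time_change u) \<omega>"

lemma measurable_Z: "0 \<le> r \<Longrightarrow> Z r \<in> borel_measurable M"
  using fBm[unfolded fBm_def, THEN conjunct2, THEN conjunct1, rule_format, of "{r}" "\<lambda>_. 1"]
  by (simp add: centered_gaussian_rv_def)

lemma continuous_Z_time_change: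
  assumes "\<omega> \<in> space M"
  shows "continuous_on UNIV (\<lambda>u. Z (time_change u) \<omega>)"
proof -
  have "continuous_on {0<..} (\<lambda>t. Z t \<omega>)"
    using continuous_Z[OF assms] by (rule continuous_on_subset) auto
  then show ?thesis
    using time_change_pos by (intro continuous_on_compose2[OF _ continuous_time_change]) auto
qed

lemma covariance_Z:
  "0 \<le> r \<Longrightarrow> 0 \<le> r' \<Longrightarrow>
    (\<integral>\<omega>. Z r \<omega> * Z r' \<omega> \<partial>M) = (r powr (2 * H) + r' powr (2 * H) - \<bar>r - r'\<bar> powr (2 * H)) / 2"
  using fBm by (simp add: fBm_def)

text \<open>The covariance formula alone does not give integrability, but a non-integrable function has
  Bochner integral 0, whereas E (Z r)^2 = r^(2H) > 0.\<close>
lemma square_integrable_Z: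
  assumes "0 < r"
  shows "integrable M (\<lambda>\<omega>. (Z r \<omega>)\<^sup>2)"
proof (rule ccontr)
  assume "\<not> integrable M (\<lambda>\<omega>. (Z r \<omega>)\<^sup>2)"
  then have "(\<integral>\<omega>. (Z r \<omega>)\<^sup>2 \<partial>M) = 0"
    by (rule not_integrable_integral_eq)
  moreover have "(\<integral>\<omega>. (Z r \<omega>)\<^sup>2 \<partial>M) = r powr (2 * H)"
    using covariance_Z[of r r] assms by (simp add: power2_eq_square)
  ultimately show False
    using assms by simp
qed

lemma wide_sense_stationary_U: "wide_sense_stationary M U cov"
proof unfold_locales
  show "U u \<in> borel_measurable M" for u
    unfolding U_def using measurable_Z[OF less_imp_le[OF time_change_pos]] by measurable
  show "continuous_on UNIV (\<lambda>u. U u \<omega>)" if "\<omega> \<in> space M" for \<omega>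
    unfolding U_def by (intro continuous_intros continuous_Z_time_change that)
  show "integrable M (\<lambda>\<omega>. (U u \<omega>)\<^sup>2)" for u
    using square_integrable_Z[OF time_change_pos, of u] by (simp add: U_def power_mult_distrib)
  show "(\<integral>\<omega>. U u \<omega> * U v \<omega> \<partial>M) = cov \<bar>u - v\<bar>" for u v
  proof -
    have "(\<integral>\<omega>. U u \<omega> * U v \<omega> \<partial>M)
        = exp (- \<alpha> * u) * exp (- \<alpha> * v) * (\<integral>\<omega>. Z (time_change u) \<omega> * Z (time_change v) \<omega> \<partial>M)"
      by (simp add: U_def algebra_simps)
    then show ?thesis
      using covariance_Z[of "time_change u" "time_change v"] time_change_pos[of u] time_change_pos[of v]
        cov_time_change[of u v]
      by simp
  qed
qed (rule continuous_cov)

sublocale U: wide_sense_stationary M U cov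
  by (rule wide_sense_stationary_U)

lemma RS_integral_time_change:
  assumes \<omega>: "\<omega> \<in> space M" and t: "0 \<le> t"
  shows "RS_integral (\<lambda>s. exp (- \<alpha> * s)) (\<lambda>s. Z (time_change s) \<omega>) 0 t
    = U t \<omega> - U 0 \<omega> + \<alpha> * (LBINT u:{0..t}. U u \<omega>)"
proof -
  have "continuous_on {0..t} (\<lambda>u. U u \<omega>)"
    using U.continuous_paths[OF \<omega>] by (rule continuous_on_subset) simp
  moreover have "continuous_on {0..t} (\<lambda>s. Z (time_change s) \<omega>)"
    using continuous_Z_time_change[OF \<omega>] by (rule continuous_on_subset) simp
  then have "has_RS_integral (\<lambda>s. exp (- \<alpha> * s)) (\<lambda>s. Z (time_change s) \<omega>) 0 t
      (exp (- \<alpha> * t) * Z (time_change t) \<omega> - exp (- \<alpha> * 0) * Z (time_change 0) \<omega>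
        - integral {0..t} (\<lambda>u. - \<alpha> * exp (- \<alpha> * u) * Z (time_change u) \<omega>))"
    by (intro has_RS_integral_by_parts t) (auto intro!: derivative_eq_intros continuous_intros)
  ultimately show ?thesis
    using t by (simp add: RS_integral_eqI U_def set_integral_Icc_eq_integral mult.assoc)
qed

end

locale fOU_integral = fOU_process +
  fixes Y :: "real \<Rightarrow> 'a \<Rightarrow> real"
  assumes Y_def: "\<And>t \<omega>. Y t \<omega> = RS_integral (\<lambda>s. exp (- \<alpha> * s)) (\<lambda>s. Z (time_change s) \<omega>) 0 t"
begin

lemma Y_eq: "\<omega> \<in> space M \<Longrightarrow> 0 \<le> t \<Longrightarrow> Y t \<omega> = U t \<omega> - U 0 \<omega> + \<alpha> * (LBINT u:{0..t}. U u \<omega>)"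
  unfolding Y_def by (rule RS_integral_time_change)

lemma Y_0:
  assumes \<omega>: "\<omega> \<in> space M"
  shows "Y 0 \<omega> = 0"
proof -
  have "(LBINT u:{0..0}. U u \<omega>) = integral {0..0} (\<lambda>u. U u \<omega>)"
    by (rule set_integral_Icc_eq_integral, rule continuous_on_subset[OF U.continuous_paths[OF \<omega>]]) simp
  then show ?thesis
    by (simp add: Y_eq[OF \<omega>])
qed

lemma Y_increment:
  assumes \<omega>: "\<omega> \<in> space M" and s: "0 \<le> s" and st: "s \<le> t"
  shows "Y t \<omega> - Y s \<omega> = U t \<omega> - U s \<omega> + \<alpha> * (LBINT u:{s..t}. U u \<omega>)"
proof -
  have "continuous_on {0..t} (\<lambda>u. U u \<omega>)"
    using U.continuous_paths[OF \<omega>] by (rule continuous_on_subset) simp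
  then have "(LBINT u:{0..t}. U u \<omega>) = (LBINT u:{0..s}. U u \<omega>) + (LBINT u:{s..t}. U u \<omega>)"
    using s st by (simp add: set_integral_Icc_eq_integral continuous_on_subset
        Henstock_Kurzweil_Integration.integral_combine integrable_continuous_real)
  then show ?thesis
    using s st by (simp add: Y_eq[OF \<omega>] algebra_simps)
qed

lemma second_moment_Y_increment:
  assumes s: "0 \<le> s" and st: "s \<le> t"
  shows "integrable M (\<lambda>\<omega>. (Y t \<omega> - Y s \<omega>)\<^sup>2)"
    and "(\<integral>\<omega>. (Y t \<omega> - Y s \<omega>)\<^sup>2 \<partial>M) = 2 * (LBINT x:{0..t - s}. (t - s - x) * k_fun \<alpha> H x)"
proof -
  have eq: "(Y t \<omega> - Y s \<omega>)\<^sup>2 = (U t \<omega> - U s \<omega> + \<alpha> * (LBINT u:{s..t}. U u \<omega>))\<^sup>2"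
    if "\<omega> \<in> space M" for \<omega>
    using Y_increment[OF that s st] by simp
  show "integrable M (\<lambda>\<omega>. (Y t \<omega> - Y s \<omega>)\<^sup>2)"
    using U.second_moment_increment(1)[OF st, of \<alpha>] by (subst Bochner_Integration.integrable_cong[OF refl eq]) auto
  have "(\<integral>\<omega>. (Y t \<omega> - Y s \<omega>)\<^sup>2 \<partial>M)
      = 2 * (cov 0 - cov (t - s)) + 2 * \<alpha>\<^sup>2 * (LBINT x:{0..t - s}. (t - s - x) * cov x)"
    using U.second_moment_increment(2)[OF st, of \<alpha>] by (subst Bochner_Integration.integral_cong[OF refl eq]) auto
  also have "\<dots> = 2 * (cov 0 - cov (t - s) + \<alpha>\<^sup>2 * (LBINT x:{0..t - s}. (t - s - x) * cov x))"
    by (simp only: distrib_left mult.assoc)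
  also have "\<dots> = 2 * (LBINT x:{0..t - s}. (t - s - x) * k_fun \<alpha> H x)"
    using st by (simp only: set_integral_weighted_k(2) diff_ge_0_iff_ge)
  finally show "(\<integral>\<omega>. (Y t \<omega> - Y s \<omega>)\<^sup>2 \<partial>M) = 2 * (LBINT x:{0..t - s}. (t - s - x) * k_fun \<alpha> H x)" .
qed

lemma second_moment_Y:
  assumes t: "0 \<le> t"
  shows "integrable M (\<lambda>\<omega>. (Y t \<omega>)\<^sup>2)"
    and "(\<integral>\<omega>. (Y t \<omega>)\<^sup>2 \<partial>M) = 2 * (LBINT x:{0..t}. (t - x) * k_fun \<alpha> H x)"
proof -
  have eq: "(Y t \<omega>)\<^sup>2 = (Y t \<omega> - Y 0 \<omega>)\<^sup>2" if "\<omega> \<in> space M" for \<omega>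
    using Y_0[OF that] by simp
  show "integrable M (\<lambda>\<omega>. (Y t \<omega>)\<^sup>2)"
    using second_moment_Y_increment(1)[OF order.refl t] by (subst Bochner_Integration.integrable_cong[OF refl eq]) auto
  show "(\<integral>\<omega>. (Y t \<omega>)\<^sup>2 \<partial>M) = 2 * (LBINT x:{0..t}. (t - x) * k_fun \<alpha> H x)"
    using second_moment_Y_increment(2)[OF order.refl t] by (subst Bochner_Integration.integral_cong[OF refl eq]) auto
qed

lemma covariance_Y:
  assumes s: "0 \<le> s" and st: "s \<le> t"
  shows "(\<integral>\<omega>. Y t \<omega> * Y s \<omega> \<partial>M)
    = (LBINT x:{0..t}. (t - x) * k_fun \<alpha> H x) + (LBINT x:{0..s}. (s - x) * k_fun \<alpha> H x)
      - (LBINT x:{0..t - s}. (t - s - x) * k_fun \<alpha> H x)"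
proof -
  have polarization: "Y t \<omega> * Y s \<omega> = ((Y t \<omega>)\<^sup>2 + (Y s \<omega>)\<^sup>2 - (Y t \<omega> - Y s \<omega>)\<^sup>2) / 2" for \<omega>
    by (simp add: power2_eq_square algebra_simps)
  show ?thesis
    unfolding polarization
    using second_moment_Y[of t] second_moment_Y[of s] second_moment_Y_increment[OF s st] s st
    by simp
qed

lemma second_moment_Y_bigo: "(\<lambda>t. \<integral>\<omega>. (Y t \<omega>)\<^sup>2 \<partial>M) \<in> O[at_top](\<lambda>t. t)"
proof (rule bigoI[where c = "2 * (LBINT x:{0<..}. k_fun \<alpha> H x)"])
  show "\<forall>\<^sub>F t in at_top. norm (\<integral>\<omega>. (Y t \<omega>)\<^sup>2 \<partial>M) \<le> 2 * (LBINT x:{0<..}. k_fun \<alpha> H x) * norm t"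
    using eventually_ge_at_top[of 0]
  proof eventually_elim
    case (elim t)
    have "0 \<le> (\<integral>\<omega>. (Y t \<omega>)\<^sup>2 \<partial>M)"
      by simp
    then have "norm (\<integral>\<omega>. (Y t \<omega>)\<^sup>2 \<partial>M) = 2 * (LBINT x:{0..t}. (t - x) * k_fun \<alpha> H x)"
      using second_moment_Y(2)[OF elim] by simp
    also have "\<dots> \<le> 2 * (t * (LBINT x:{0<..}. k_fun \<alpha> H x))"
      using set_integral_weighted_k_le[OF elim] by simp
    finally show ?case
      using elim by (simp add: mult_ac)
  qed
qed

lemma tendsto_covariance_Y:
  assumes s: "0 \<le> s"
  shows "((\<lambda>t. \<integral>\<omega>. Y t \<omega> * Y s \<omega> \<partial>M)
    \<longlongrightarrow> s * (LBINT x:{0<..}. k_fun \<alpha> H x) + (LBINT x:{0..s}. (s - x) * k_fun \<alpha> H x)) at_top"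
proof -
  have "\<forall>\<^sub>F t in at_top. (LBINT x:{0..t}. (t - x) * k_fun \<alpha> H x)
      - (LBINT x:{0..t - s}. (t - s - x) * k_fun \<alpha> H x) + (LBINT x:{0..s}. (s - x) * k_fun \<alpha> H x)
    = (\<integral>\<omega>. Y t \<omega> * Y s \<omega> \<partial>M)"
    using eventually_ge_at_top[of s] by eventually_elim (simp add: covariance_Y[OF s])
  then show ?thesis
    by (rule tendsto_cong[THEN iffD1]) (intro tendsto_add tendsto_set_integral_weighted_k_diff s tendsto_const)
qed

end

theorem proposition3p5:
  fixes M :: "'a measure" and H \<alpha> :: real
    and Z Y :: "real \<Rightarrow> 'a \<Rightarrow> real"
  assumes H: "1/2 < H" "H < 1"
    and fbm: "fBm M H Z"
    and cont: "\<forall>\<omega>\<in>space M. continuous_on {0..} (\<lambda>t. Z t \<omega>)"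
    and alpha: "\<alpha> > 0"
    and Y_def: "\<forall>t \<omega>. Y t \<omega> =
        RS_integral (\<lambda>s. exp (- \<alpha> * s)) (\<lambda>s. Z (H * exp (\<alpha> * s / H) / \<alpha>) \<omega>) 0 t"
  shows
    "(\<forall>s t. 0 \<le> s \<longrightarrow> s < t \<longrightarrow>
        integral\<^sup>L M (\<lambda>\<omega>. (Y t \<omega> - Y s \<omega>)\<^sup>2)
          = 2 * (LBINT x:{0..t - s}. (t - s - x) * k_fun \<alpha> H x)
      \<and> integral\<^sup>L M (\<lambda>\<omega>. Y t \<omega> * Y s \<omega>)
          = (LBINT x:{0..t}. (t - x) * k_fun \<alpha> H x)
            + (LBINT x:{0..s}. (s - x) * k_fun \<alpha> H x)
            - (LBINT x:{0..t - s}. (t - s - x) * k_fun \<alpha> H x))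
   \<and> (\<lambda>t. integral\<^sup>L M (\<lambda>\<omega>. (Y t \<omega>)\<^sup>2)) \<in> O[at_top](\<lambda>t. t)
   \<and> (\<forall>s\<ge>0. ((\<lambda>t. integral\<^sup>L M (\<lambda>\<omega>. Y t \<omega> * Y s \<omega>))
        \<longlongrightarrow> s * (LBINT x:{0<..}. k_fun \<alpha> H x)
              + (LBINT x:{0..s}. (s - x) * k_fun \<alpha> H x)) at_top)"
proof -
  interpret fOU_parameters \<alpha> H
    by unfold_locales (use H alpha in auto)
  interpret fOU_integral \<alpha> H M Z Y
    by unfold_locales (use fbm cont Y_def in \<open>auto simp: time_change_def\<close>)
  show ?thesis
    using second_moment_Y_increment(2) covariance_Y second_moment_Y_bigo tendsto_covariance_Y
    by (auto simp: less_imp_le)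
qed

end
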